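(* For every $\varepsilon>0$ and every $\alpha<1$ there exists $\delta>0$ such that the following holds. Let $G$ be a connected graph on vertex set $[n]$, let $R\sim G(n,\varepsilon/n)$ and $G^*=G\cup R$. Then asymptotically almost surely, for every set $S\subseteq [n]$ with $0<|S|\le \alpha n$, $$|\partial_{G^*}S|\ge \frac{\delta}{\log(en/|S|)}\,|S|.$$ In particular, asymptotically almost surely $c(G^* )\ge \frac{\delta}{\log(en)}$.
   Context: $G(n,p)$ denotes the binomial random graph on $[n]$ with each pair an edge independently with probability $p$; $G\cup R$ is the graph on $[n]$ with edge set the union of those of $G$ and $R$. For a graph $H$ and a vertex set $S$, $\partial_H S$ is the set of edges of $H$ with exactly one endpoint in $S$. The Cheeger constant is $c(H)=\min\{|\partial_H U|/|U| : 0<|U|\le |V(H)|/2\}$. Asymptotically almost surely means with probability tending to $1$ as $n\to\infty$, for an arbitrary sequence of such graphs $G=G_n$. *)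

theory Defs
  imports Complex_Main
begin

text \<open>Graphs on vertex set [n] = {0..<n}; an edge is a 2-element subset of [n].\<close>

definition all_pairs :: "nat \<Rightarrow> nat set set" where
  "all_pairs n = {e. \<exists>u v. u < n \<and> v < n \<and> u \<noteq> v \<and> e = {u, v}}"

definition connected_graph :: "nat \<Rightarrow> nat set set \<Rightarrow> bool" where
  "connected_graph n E \<longleftrightarrow> E \<subseteq> all_pairs n \<and>
     (\<forall>u<n. \<forall>v<n. (u, v) \<in> {(x, y). {x, y} \<in> E}\<^sup>*)"

definition boundary :: "nat set set \<Rightarrow> nat set \<Rightarrow> nat set set" where
  "boundary E S = {e \<in> E. card (e \<inter> S) = 1}"

definition cheeger :: "nat \<Rightarrow> nat set set \<Rightarrow> real" where
  "cheeger n E = Min {real (card (boundary E U)) / real (card U) | U.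
      U \<subseteq> {..<n} \<and> 0 < card U \<and> real (card U) \<le> real n / 2}"

text \<open>Probability that R \<sim> G(n,p) satisfies the property P: each pair in [n] is an
  edge independently with probability p.\<close>
definition gnp_prob :: "nat \<Rightarrow> real \<Rightarrow> (nat set set \<Rightarrow> bool) \<Rightarrow> real" where
  "gnp_prob n p P = (\<Sum>R\<in>Pow (all_pairs n).
      if P R then p ^ card R * (1 - p) ^ (card (all_pairs n) - card R) else 0)"

end

theory Submission
  imports Defs "HOL-Real_Asymp.Real_Asymp"
begin

text \<open>Fix \<open>S\<close> with \<open>|S| = s \<le> \<alpha> n\<close>. Each of the at least \<open>s (1 - \<alpha>) n\<close> pairs between \<open>S\<close> and its
  complement lies in \<open>R\<close> independently with probability \<open>\<epsilon> / n\<close>, so by a Chernoff bound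
  \<open>R\<close> contributes fewer than \<open>\<delta> s\<close> boundary edges with probability at most \<open>exp (- (c - \<delta>) s)\<close>,
  where \<open>c = \<epsilon> (1 - \<alpha>) / 2\<close>. This only matters for the sets whose boundary in \<open>G\<close> is already
  smaller than \<open>\<delta> s / log (e n / s)\<close>. As \<open>G\<close> is connected, such a set is determined by the
  endpoints of its boundary edges together with its trace on them, so there are at most
  \<open>exp ((c - \<delta>) s / 2)\<close> of them; and its boundary is nonempty, which forces
  \<open>s > min (\<surd>n) (log n / (2 \<delta>))\<close>. A union bound over these sets leaves a failure probability
  that tends to \<open>0\<close>. The Cheeger bound is the case \<open>\<alpha> = 1/2\<close>.\<close>

section \<open>The binomial random graph\<close>

lemma finite_all_pairs: "finite (all_pairs n)"
proof -
  have "all_pairs n \<subseteq> Pow {..<n}" unfolding all_pairs_def by auto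
  then show ?thesis by (rule finite_subset) auto
qed

lemma sum_Pow_binomial_weights_power:
  fixes p x :: real
  assumes A: "finite A" and C: "C \<subseteq> A"
  shows "(\<Sum>R\<in>Pow A. p ^ card R * (1 - p) ^ (card A - card R) * x ^ card (R \<inter> C))
           = (p * x + (1 - p)) ^ card C"
proof -
  let ?f = "\<lambda>a. p * (if a \<in> C then x else 1)"
  have "(\<Sum>R\<in>Pow A. p ^ card R * (1 - p) ^ (card A - card R) * x ^ card (R \<inter> C))
          = (\<Sum>R\<in>Pow A. prod ?f R * (\<Prod>a\<in>A - R. 1 - p))"
  proof (intro sum.cong refl)
    fix R assume "R \<in> Pow A"
    then have R: "R \<subseteq> A" "finite R" using A finite_subset by auto
    have "prod ?f R = p ^ card R * x ^ card (R \<inter> C)"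
      using R by (simp add: prod.distrib prod.If_cases Int_def)
    moreover have "(\<Prod>a\<in>A - R. 1 - p) = (1 - p) ^ (card A - card R)"
      using R A by (simp add: card_Diff_subset)
    ultimately show "p ^ card R * (1 - p) ^ (card A - card R) * x ^ card (R \<inter> C)
                       = prod ?f R * (\<Prod>a\<in>A - R. 1 - p)"
      by (simp add: mult_ac)
  qed
  also have "\<dots> = (\<Prod>a\<in>A. ?f a + (1 - p))"
    by (rule prod_add[OF A, symmetric])
  also have "\<dots> = (\<Prod>a\<in>A. if a \<in> C then p * x + (1 - p) else 1)"
    by (intro prod.cong) auto
  also have "\<dots> = (p * x + (1 - p)) ^ card C"
    using A C by (simp add: prod.If_cases Int_absorb1)
  finally show ?thesis .
qed

lemma gnp_prob_True: "gnp_prob n p (\<lambda>_. True) = 1"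
  using sum_Pow_binomial_weights_power[OF finite_all_pairs, where C = "{}" and p = p and x = 1]
  by (simp add: gnp_prob_def)

lemma gnp_prob_mono:
  assumes "0 \<le> p" "p \<le> 1" "\<And>R. R \<subseteq> all_pairs n \<Longrightarrow> P R \<Longrightarrow> Q R"
  shows "gnp_prob n p P \<le> gnp_prob n p Q"
  unfolding gnp_prob_def using assms by (intro sum_mono) auto

lemma gnp_prob_le_1:
  assumes "0 \<le> p" "p \<le> 1"
  shows "gnp_prob n p P \<le> 1"
  using gnp_prob_mono[OF assms, of n P "\<lambda>_. True"] gnp_prob_True by simp

lemma gnp_prob_Not: "gnp_prob n p (\<lambda>R. \<not> P R) = 1 - gnp_prob n p P"
proof -
  have "gnp_prob n p P + gnp_prob n p (\<lambda>R. \<not> P R) = gnp_prob n p (\<lambda>_. True)"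
    unfolding gnp_prob_def sum.distrib[symmetric] by (intro sum.cong) auto
  then show ?thesis using gnp_prob_True by simp
qed

lemma gnp_prob_Bex_le_sum:
  assumes "0 \<le> p" "p \<le> 1" "finite I"
  shows "gnp_prob n p (\<lambda>R. \<exists>i\<in>I. Q i R) \<le> (\<Sum>i\<in>I. gnp_prob n p (Q i))"
proof -
  let ?w = "\<lambda>R. p ^ card R * (1 - p) ^ (card (all_pairs n) - card R)"
  have "gnp_prob n p (\<lambda>R. \<exists>i\<in>I. Q i R)
          \<le> (\<Sum>R\<in>Pow (all_pairs n). \<Sum>i\<in>I. if Q i R then ?w R else 0)"
    unfolding gnp_prob_def
  proof (intro sum_mono)
    fix R
    have "?w R \<le> (\<Sum>i\<in>I. if Q i R then ?w R else 0)" if "i \<in> I" "Q i R" for i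
      using member_le_sum[OF that(1), of "\<lambda>i. if Q i R then ?w R else 0"] that assms by auto
    then show "(if \<exists>i\<in>I. Q i R then ?w R else 0) \<le> (\<Sum>i\<in>I. if Q i R then ?w R else 0)"
      using assms by (auto intro: sum_nonneg)
  qed
  also have "\<dots> = (\<Sum>i\<in>I. gnp_prob n p (Q i))"
    unfolding gnp_prob_def by (rule sum.swap)
  finally show ?thesis .
qed

text \<open>Markov's inequality applied to \<open>exp (t - |R \<inter> C|)\<close>.\<close>

lemma gnp_prob_card_Int_less:
  assumes p: "0 \<le> p" "p \<le> 1" and C: "C \<subseteq> all_pairs n"
  shows "gnp_prob n p (\<lambda>R. real (card (R \<inter> C)) < t) \<le> exp (t - p * real (card C) / 2)"
proof -
  let ?w = "\<lambda>R. p ^ card R * (1 - p) ^ (card (all_pairs n) - card R)"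
  have "gnp_prob n p (\<lambda>R. real (card (R \<inter> C)) < t)
          \<le> (\<Sum>R\<in>Pow (all_pairs n). exp t * (?w R * exp (-1) ^ card (R \<inter> C)))"
    unfolding gnp_prob_def
  proof (intro sum_mono)
    fix R
    have shift: "exp t * exp (-1) ^ card (R \<inter> C) = exp (t - real (card (R \<inter> C)))"
      by (simp add: exp_diff exp_minus exp_of_nat_mult[symmetric] power_divide field_simps)
    have "?w R \<le> ?w R * exp (t - real (card (R \<inter> C)))" if "real (card (R \<inter> C)) < t"
      using mult_left_mono[of 1 "exp (t - real (card (R \<inter> C)))" "?w R"] that p by simp
    then show "(if real (card (R \<inter> C)) < t then ?w R else 0)
                 \<le> exp t * (?w R * exp (-1) ^ card (R \<inter> C))"
      unfolding mult.left_commute[of "exp t"] shift using p by auto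
  qed
  also have "\<dots> = exp t * (p * exp (-1) + (1 - p)) ^ card C"
    using sum_Pow_binomial_weights_power[OF finite_all_pairs C]
    by (simp add: sum_distrib_left[symmetric])
  also have "\<dots> \<le> exp t * exp (- p / 2) ^ card C"
  proof (intro mult_left_mono power_mono)
    have "exp (1::real) \<ge> 2" using exp_ge_add_one_self[of 1] by simp
    then have "p * exp (-1) \<le> p / 2" using p by (simp add: exp_minus field_simps mult_left_mono)
    then show "p * exp (-1) + (1 - p) \<le> exp (- p / 2)"
      using exp_ge_add_one_self[of "- p / 2"] by linarith
  qed (use p in auto)
  also have "exp (- p / 2) ^ card C = exp (- p * real (card C) / 2)"
    by (simp add: exp_of_nat_mult[symmetric] mult_ac)
  also have "exp t * \<dots> = exp (t - p * real (card C) / 2)"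
    by (simp add: exp_add[symmetric])
  finally show ?thesis .
qed

lemma gnp_prob_tendsto_1I:
  assumes p: "eventually (\<lambda>n. 0 \<le> p n \<and> p n \<le> 1) sequentially"
    and fail: "eventually (\<lambda>n. gnp_prob n (p n) (\<lambda>R. \<not> P n R) \<le> b n) sequentially"
    and b: "b \<longlonglongrightarrow> 0"
  shows "(\<lambda>n. gnp_prob n (p n) (P n)) \<longlonglongrightarrow> 1"
proof (rule tendsto_sandwich[where f = "\<lambda>n. 1 - b n" and h = "\<lambda>_. 1"])
  show "eventually (\<lambda>n. 1 - b n \<le> gnp_prob n (p n) (P n)) sequentially"
    using fail by eventually_elim (simp add: gnp_prob_Not)
  show "eventually (\<lambda>n. gnp_prob n (p n) (P n) \<le> 1) sequentially"
    using p by eventually_elim (simp add: gnp_prob_le_1)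
  show "(\<lambda>n. 1 - b n) \<longlonglongrightarrow> 1"
    using tendsto_diff[OF tendsto_const b, of 1] by simp
qed simp

lemma gnp_prob_tendsto_1_mono:
  assumes p: "eventually (\<lambda>n. 0 \<le> p n \<and> p n \<le> 1) sequentially"
    and lim: "(\<lambda>n. gnp_prob n (p n) (P n)) \<longlonglongrightarrow> 1"
    and imp: "eventually (\<lambda>n. \<forall>R. P n R \<longrightarrow> Q n R) sequentially"
  shows "(\<lambda>n. gnp_prob n (p n) (Q n)) \<longlonglongrightarrow> 1"
proof (rule gnp_prob_tendsto_1I[OF p])
  show "eventually (\<lambda>n. gnp_prob n (p n) (\<lambda>R. \<not> Q n R) \<le> 1 - gnp_prob n (p n) (P n)) sequentially"
    using p imp by eventually_elim (auto simp: gnp_prob_Not[symmetric] intro: gnp_prob_mono)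
  show "(\<lambda>n. 1 - gnp_prob n (p n) (P n)) \<longlonglongrightarrow> 0"
    using tendsto_diff[OF tendsto_const lim, of 1] by simp
qed

lemma eventually_edge_prob_le_1:
  fixes \<epsilon> :: real
  assumes "0 < \<epsilon>"
  shows "eventually (\<lambda>n. 0 \<le> \<epsilon> / real n \<and> \<epsilon> / real n \<le> 1) sequentially"
  using eventually_ge_at_top[of "nat \<lceil>\<epsilon>\<rceil> + 1"]
proof eventually_elim
  case (elim n)
  then have "\<epsilon> \<le> real n" "0 < real n" by linarith+
  then show ?case using assms by (simp add: divide_le_eq)
qed

section \<open>Edge boundaries in connected graphs\<close>

lemma card_doubleton_Int_eq_1_iff:
  assumes "x \<noteq> y"
  shows "card ({x, y} \<inter> D) = 1 \<longleftrightarrow> (x \<in> D) \<noteq> (y \<in> D)"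
  using assms by (cases "x \<in> D"; cases "y \<in> D") (auto simp: Int_insert_left)

lemma boundary_subset_all_pairs: "E \<subseteq> all_pairs n \<Longrightarrow> boundary E S \<subseteq> all_pairs n"
  unfolding boundary_def by blast

lemma finite_boundary: "E \<subseteq> all_pairs n \<Longrightarrow> finite (boundary E S)"
  by (rule finite_subset[OF boundary_subset_all_pairs finite_all_pairs])

lemma Union_boundary_subset: "E \<subseteq> all_pairs n \<Longrightarrow> \<Union>(boundary E S) \<subseteq> {..<n}"
  unfolding boundary_def all_pairs_def by auto

lemma boundary_mono: "E \<subseteq> E' \<Longrightarrow> boundary E S \<subseteq> boundary E' S"
  unfolding boundary_def by blast

lemma connected_graph_boundary_nonempty:
  assumes conn: "connected_graph n E" and "u \<in> D" "u < n" "v < n" "v \<notin> D"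
  shows "boundary E D \<noteq> {}"
proof -
  have E: "E \<subseteq> all_pairs n" and uv: "(u, v) \<in> {(x, y). {x, y} \<in> E}\<^sup>*"
    using conn assms unfolding connected_graph_def by auto
  have "w \<in> D \<or> boundary E D \<noteq> {}" if "(u, w) \<in> {(x, y). {x, y} \<in> E}\<^sup>*" for w
    using that
  proof (induction rule: rtrancl_induct)
    case (step y z)
    then have yz: "{y, z} \<in> E" by simp
    then have "y \<noteq> z" using E unfolding all_pairs_def by (auto simp: doubleton_eq_iff)
    then have "{y, z} \<in> boundary E D" if "y \<in> D" "z \<notin> D"
      using yz that card_doubleton_Int_eq_1_iff[of y z D] unfolding boundary_def by blast
    then show ?case using step.IH by blast
  qed (use \<open>u \<in> D\<close> in simp)
  with uv \<open>v \<notin> D\<close> show ?thesis by blast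
qed

lemma connected_graph_card_boundary_pos:
  assumes conn: "connected_graph n E" and D: "D \<subseteq> {..<n}" "D \<noteq> {}" "card D < n"
  shows "0 < card (boundary E D)"
proof -
  obtain u where u: "u \<in> D" using D by auto
  have "D \<noteq> {..<n}" using D by auto
  then obtain v where "v < n" "v \<notin> D" using D by auto
  then have "boundary E D \<noteq> {}"
    using connected_graph_boundary_nonempty[OF conn u] u D by blast
  moreover have "finite (boundary E D)"
    using conn by (intro finite_boundary) (auto simp: connected_graph_def)
  ultimately show ?thesis by (simp add: card_gt_0_iff)
qed

text \<open>In a connected graph a nonempty vertex set \<open>S\<close> is determined by the set \<open>Z\<close> of endpoints
  of its boundary edges together with \<open>S \<inter> Z\<close>: if \<open>S\<close> had a vertex outside \<open>S'\<close>, then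
  \<open>S - S'\<close> would have no boundary at all.\<close>

lemma connected_graph_subset_if_same_boundary_trace:
  assumes conn: "connected_graph n E"
    and S: "S \<subseteq> {..<n}" and S': "S' \<subseteq> {..<n}" "S' \<noteq> {}"
    and Z: "\<Union>(boundary E S) = \<Union>(boundary E S')"
    and I: "S \<inter> \<Union>(boundary E S) = S' \<inter> \<Union>(boundary E S')"
  shows "S \<subseteq> S'"
proof (rule ccontr)
  assume "\<not> S \<subseteq> S'"
  then obtain u where u: "u \<in> S - S'" by auto
  have E: "E \<subseteq> all_pairs n" using conn unfolding connected_graph_def by auto
  have "boundary E (S - S') = {}"
  proof (rule ccontr)
    assume "boundary E (S - S') \<noteq> {}"
    then obtain x y where e: "{x, y} \<in> E" "x \<noteq> y" "card ({x, y} \<inter> (S - S')) = 1"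
      using E unfolding boundary_def all_pairs_def by blast
    then obtain a b where ab: "{a, b} \<in> E" "a \<noteq> b" "a \<in> S - S'" "b \<notin> S - S'"
      using card_doubleton_Int_eq_1_iff[of x y "S - S'"] by (metis insert_commute)
    have "{a, b} \<in> boundary E S \<or> {a, b} \<in> boundary E S'"
      using ab card_doubleton_Int_eq_1_iff[of a b] unfolding boundary_def by auto
    then have "a \<in> S \<inter> \<Union>(boundary E S)" using ab Z by auto
    then show False using I ab by auto
  qed
  then have "{..<n} \<subseteq> S - S'"
    using connected_graph_boundary_nonempty[OF conn u] u S by blast
  then show False using S S' by auto
qed

lemma connected_graph_inj_on_boundary_trace:
  assumes "connected_graph n E"
  shows "inj_on (\<lambda>S. (\<Union>(boundary E S), S \<inter> \<Union>(boundary E S))) {S. S \<subseteq> {..<n} \<and> S \<noteq> {}}"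
proof (rule inj_onI)
  fix S S' assume "S \<in> {S. S \<subseteq> {..<n} \<and> S \<noteq> {}}" "S' \<in> {S. S \<subseteq> {..<n} \<and> S \<noteq> {}}"
    and "(\<Union>(boundary E S), S \<inter> \<Union>(boundary E S)) = (\<Union>(boundary E S'), S' \<inter> \<Union>(boundary E S'))"
  then show "S = S'"
    using connected_graph_subset_if_same_boundary_trace[OF assms, of S S']
      connected_graph_subset_if_same_boundary_trace[OF assms, of S' S] by auto
qed

lemma card_Union_boundary_le:
  assumes "E \<subseteq> all_pairs n"
  shows "card (\<Union>(boundary E S)) \<le> 2 * card (boundary E S)"
proof -
  have "card (\<Union>(boundary E S)) \<le> sum card (boundary E S)" by (rule card_Union_le_sum_card)
  also have "\<dots> = sum (\<lambda>_. 2) (boundary E S)"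
    using assms by (intro sum.cong) (auto simp: boundary_def all_pairs_def)
  finally show ?thesis by simp
qed

lemma sum_Pow_power_card:
  fixes x :: real
  shows "(\<Sum>Z\<in>Pow {..<n}. x ^ card Z) = (1 + x) ^ n"
proof -
  have "(\<Prod>i\<in>{..<n}. x + 1) = (\<Sum>Z\<in>Pow {..<n}. (\<Prod>i\<in>Z. x) * (\<Prod>i\<in>{..<n} - Z. 1))"
    by (rule prod_add) simp
  then show ?thesis by (simp add: add.commute)
qed

text \<open>The encoding \<open>S \<mapsto> (Z, S \<inter> Z)\<close> bounds the number of such sets by the sum of \<open>2\<^bsup>|Z|\<^esup>\<close>
  over all \<open>Z\<close> with \<open>|Z| < k\<close>, which is estimated by Rankin's trick with the weight \<open>y\<^bsup>|Z| - k\<^esup>\<close>.\<close>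

lemma card_sets_with_few_boundary_vertices:
  fixes k y :: real
  assumes conn: "connected_graph n E"
    and T: "\<And>S. S \<in> T \<Longrightarrow> S \<subseteq> {..<n} \<and> S \<noteq> {} \<and> real (card (\<Union>(boundary E S))) < k"
    and y: "0 < y" "y \<le> 1"
  shows "real (card T) \<le> (1 + 2 * y) ^ n / y powr k"
proof -
  have E: "E \<subseteq> all_pairs n" using conn unfolding connected_graph_def by auto
  let ?Zs = "{Z \<in> Pow {..<n}. real (card Z) < k}"
  let ?code = "\<lambda>S. (\<Union>(boundary E S), S \<inter> \<Union>(boundary E S))"
  have code: "?code S \<in> Sigma ?Zs Pow" if "S \<in> T" for S
    unfolding mem_Sigma_iff mem_Collect_eq Pow_iff
    using T[OF that] Union_boundary_subset[OF E, of S] by blast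
  have "T \<subseteq> {S. S \<subseteq> {..<n} \<and> S \<noteq> {}}" using T by auto
  then have "inj_on ?code T"
    using connected_graph_inj_on_boundary_trace[OF conn] inj_on_subset by blast
  moreover have "?code ` T \<subseteq> Sigma ?Zs Pow"
    using code by blast
  moreover have "finite (Sigma ?Zs Pow)"
    by (intro finite_SigmaI) (auto intro: finite_subset[OF _ finite_lessThan])
  ultimately have "card T \<le> card (Sigma ?Zs Pow)" by (rule card_inj_on_le)
  also have "\<dots> = (\<Sum>Z\<in>?Zs. card (Pow Z))"
    by (rule card_SigmaI) (auto intro: finite_subset[OF _ finite_lessThan])
  also have "\<dots> = (\<Sum>Z\<in>?Zs. 2 ^ card Z)"
    by (intro sum.cong refl card_Pow) (auto intro: finite_subset[OF _ finite_lessThan])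
  finally have "real (card T) \<le> real (\<Sum>Z\<in>?Zs. 2 ^ card Z)" by (rule of_nat_mono)
  also have "\<dots> = (\<Sum>Z\<in>?Zs. 2 ^ card Z)" by simp
  also have "\<dots> \<le> (\<Sum>Z\<in>?Zs. (2 * y) ^ card Z / y powr k)"
  proof (intro sum_mono)
    fix Z assume "Z \<in> ?Zs"
    then have "y powr k \<le> y ^ card Z" using y by (auto intro: powr_mono' simp flip: powr_realpow)
    then show "(2::real) ^ card Z \<le> (2 * y) ^ card Z / y powr k"
      using y by (simp add: field_simps power_mult_distrib mult_left_mono)
  qed
  also have "\<dots> \<le> (\<Sum>Z\<in>Pow {..<n}. (2 * y) ^ card Z / y powr k)"
    using y by (intro sum_mono2) auto
  also have "\<dots> = (1 + 2 * y) ^ n / y powr k"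
    by (simp only: sum_divide_distrib[symmetric] sum_Pow_power_card)
  finally show ?thesis .
qed

lemma ln_exp_mult_div_ge_1:
  fixes s n :: real
  assumes "0 < s" "s \<le> n"
  shows "1 \<le> ln (exp 1 * n / s)"
proof -
  have "exp 1 \<le> exp 1 * n / s" using assms by (simp add: le_divide_eq)
  then have "ln (exp 1) \<le> ln (exp 1 * n / s)" using assms by (subst ln_le_cancel_iff) auto
  then show ?thesis by simp
qed

definition expansion_const :: "real \<Rightarrow> real" where
  "expansion_const c = (min c 1 / 24)\<^sup>2 / 2"

lemma expansion_const_pos: "0 < c \<Longrightarrow> 0 < expansion_const c"
  unfolding expansion_const_def by simp

lemma expansion_const_le: "0 < c \<Longrightarrow> 2 * expansion_const c \<le> min c 1"
  unfolding expansion_const_def min_def by (simp add: power2_eq_square)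

text \<open>The left-hand side is the logarithm of the bound of \<open>card_sets_with_few_boundary_vertices\<close>
  for \<open>y = k / n\<close>.\<close>

lemma boundary_entropy_le:
  fixes c s n :: real
  assumes c: "0 < c" and s: "1 \<le> s" "s \<le> n"
  defines "\<delta> \<equiv> expansion_const c"
  defines "k \<equiv> 2 * \<delta> * s / ln (exp 1 * n / s)"
  shows "2 * k + k * ln (n / k) \<le> (c - \<delta>) * s / 2"
proof -
  define v where "v = min c 1 / 24"
  define L where "L = ln (exp 1 * n / s)"
  have v: "0 < v" "v \<le> 1/24" "v \<le> c / 24" using c by (auto simp: v_def)
  have \<delta>: "2 * \<delta> = v\<^sup>2" by (simp add: \<delta>_def expansion_const_def v_def)
  have L1: "1 \<le> L" unfolding L_def using s by (intro ln_exp_mult_div_ge_1) auto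
  have L: "L = 1 + ln (n / s)" unfolding L_def using s by (simp add: ln_mult ln_div)
  have k: "k = v\<^sup>2 * s / L" using \<delta> by (simp add: k_def L_def)
  have k0: "0 < k" unfolding k using v L1 s by simp
  have "ln (n / k) = ln (n / s) + ln L - 2 * ln v"
  proof -
    have "n / k = (n / s) * (L / v\<^sup>2)" unfolding k using L1 s v by (simp add: field_simps)
    then show ?thesis using L1 v s by (simp add: ln_mult ln_div ln_realpow)
  qed
  also have "\<dots> \<le> 2 * L + 2 / v"
  proof -
    have "ln (1 / v) \<le> 1 / v - 1" using v by (intro ln_le_minus_one) simp
    then have "- ln v \<le> 1 / v" using v by (simp add: ln_div)
    then show ?thesis using ln_le_minus_one[of L] L1 L by simp
  qed
  finally have "k * ln (n / k) \<le> k * (2 * L + 2 / v)" using k0 by (intro mult_left_mono) auto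
  also have "\<dots> = 2 * v\<^sup>2 * s + 2 * v * s / L"
    unfolding k using L1 v by (simp add: field_simps power2_eq_square)
  also have "\<dots> \<le> 2 * v\<^sup>2 * s + 2 * v * s / 1"
    using L1 v s by (intro add_left_mono divide_left_mono) auto
  finally have A: "k * ln (n / k) \<le> 2 * v\<^sup>2 * s + 2 * v * s" by simp
  have "2 * k \<le> 2 * (v\<^sup>2 * s / 1)"
    unfolding k using L1 s v by (intro mult_left_mono divide_left_mono) auto
  then have B: "2 * k \<le> 2 * v\<^sup>2 * s" by simp
  have v2: "v\<^sup>2 \<le> v" using v by (simp add: power2_eq_square mult_le_cancel_right1)
  then have "v\<^sup>2 * s \<le> v * s" using s by (intro mult_right_mono) auto
  then have "2 * k + k * ln (n / k) \<le> 6 * v * s" using A B by linarith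
  also have "\<dots> \<le> (c - \<delta>) * s / 2"
  proof -
    have "12 * v + \<delta> \<le> c" using v \<delta> v2 by linarith
    then have "(12 * v + \<delta>) * s \<le> c * s" using s by (intro mult_right_mono) auto
    then show ?thesis by (simp add: algebra_simps)
  qed
  finally show ?thesis .
qed

lemma large_if_cut_threshold_gt_1:
  fixes s n \<delta> :: real
  assumes \<delta>: "0 < \<delta>" and s: "1 \<le> s" "s \<le> n" and gt: "1 < \<delta> / ln (exp 1 * n / s) * s"
  shows "sqrt n < s \<or> ln n / (2 * \<delta>) < s"
proof (cases "sqrt n < s")
  case False
  then have "ln s \<le> ln n / 2" using s by (simp add: ln_sqrt[symmetric])
  moreover have "ln (exp 1 * n / s) = 1 + ln n - ln s" using s by (simp add: ln_mult ln_div)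
  moreover have "ln (exp 1 * n / s) < \<delta> * s"
  proof -
    have "1 \<le> ln (exp 1 * n / s)" using s by (intro ln_exp_mult_div_ge_1) auto
    then have "0 < ln (exp 1 * n / s)" by linarith
    then show ?thesis using gt by (simp add: field_simps)
  qed
  ultimately show ?thesis using \<delta> by (simp add: field_simps)
qed simp

lemma sum_exp_le_geometric:
  fixes a :: real
  assumes "0 < a"
  shows "(\<Sum>s\<le>N. exp (- a * real s / 4)) \<le> 1 / (1 - exp (- a / 4))"
proof -
  let ?r = "exp (- a / 4)"
  have r: "?r < 1" "0 < ?r" using assms by auto
  have "(\<Sum>s\<le>N. exp (- a * real s / 4)) = (\<Sum>s\<le>N. ?r ^ s)"
    by (intro sum.cong refl) (simp add: exp_of_nat_mult[symmetric] algebra_simps)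
  also have "\<dots> = (1 - ?r ^ Suc N) / (1 - ?r)" using r by (simp add: sum_gp0)
  also have "\<dots> \<le> 1 / (1 - ?r)" using r by (intro divide_right_mono) auto
  finally show ?thesis .
qed

definition crossing_pairs :: "nat \<Rightarrow> nat set \<Rightarrow> nat set set" where
  "crossing_pairs n S = (\<lambda>(u, v). {u, v}) ` (S \<times> ({..<n} - S))"

lemma card_crossing_pairs:
  assumes "S \<subseteq> {..<n}"
  shows "card (crossing_pairs n S) = card S * (n - card S)"
proof -
  have "inj_on (\<lambda>(u, v). {u, v}) (S \<times> ({..<n} - S))"
    by (auto simp: inj_on_def doubleton_eq_iff)
  then have "card (crossing_pairs n S) = card (S \<times> ({..<n} - S))"
    unfolding crossing_pairs_def by (rule card_image)
  also have "\<dots> = card S * (n - card S)"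
    using assms finite_subset[OF assms] by (simp add: card_cartesian_product card_Diff_subset)
  finally show ?thesis .
qed

lemma crossing_pairs_subset_all_pairs: "S \<subseteq> {..<n} \<Longrightarrow> crossing_pairs n S \<subseteq> all_pairs n"
  unfolding crossing_pairs_def all_pairs_def by auto

lemma Int_crossing_pairs_subset_boundary: "R \<inter> crossing_pairs n S \<subseteq> boundary (E \<union> R) S"
proof
  fix e assume "e \<in> R \<inter> crossing_pairs n S"
  then obtain u v where "e \<in> R" "e = {u, v}" "u \<in> S" "v \<notin> S"
    unfolding crossing_pairs_def by auto
  moreover have "{u, v} \<inter> S = {u}" using \<open>u \<in> S\<close> \<open>v \<notin> S\<close> by auto
  ultimately show "e \<in> boundary (E \<union> R) S" unfolding boundary_def by auto
qed

section \<open>Expansion of the perturbed graph\<close>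

abbreviation cut_threshold :: "real \<Rightarrow> nat \<Rightarrow> nat \<Rightarrow> real" where
  "cut_threshold \<delta> n s \<equiv> \<delta> / ln (exp 1 * real n / real s) * real s"

abbreviation log_expanding :: "real \<Rightarrow> real \<Rightarrow> nat \<Rightarrow> nat set set \<Rightarrow> bool" where
  "log_expanding \<alpha> \<delta> n H \<equiv> \<forall>S. S \<subseteq> {..<n} \<and> 0 < card S \<and> real (card S) \<le> \<alpha> * real n \<longrightarrow>
     real (card (boundary H S)) \<ge> cut_threshold \<delta> n (card S)"

definition sparse_cuts :: "real \<Rightarrow> real \<Rightarrow> nat \<Rightarrow> nat set set \<Rightarrow> nat set set" where
  "sparse_cuts \<alpha> \<delta> n E = {S. S \<subseteq> {..<n} \<and> 0 < card S \<and> real (card S) \<le> \<alpha> * real n \<and>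
     real (card (boundary E S)) < cut_threshold \<delta> n (card S)}"

definition sparse_cut_tail :: "real \<Rightarrow> real \<Rightarrow> nat \<Rightarrow> real" where
  "sparse_cut_tail a \<delta> n =
     (exp (- a * sqrt (real n) / 4) + exp (- a * (ln (real n) / (2 * \<delta>)) / 4)) / (1 - exp (- a / 4))"

lemma sparse_cut_tail_tendsto_0:
  fixes a \<delta> :: real
  assumes "0 < a" "0 < \<delta>"
  shows "sparse_cut_tail a \<delta> \<longlonglongrightarrow> 0"
  unfolding sparse_cut_tail_def using assms by real_asymp

lemma cut_threshold_le:
  assumes "0 \<le> \<delta>" "0 < s" "s \<le> n"
  shows "cut_threshold \<delta> n s \<le> \<delta> * real s"
proof -
  have "\<delta> / L * real s \<le> \<delta> * real s" if "1 \<le> L" for L :: real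
  proof (intro mult_right_mono)
    show "\<delta> / L \<le> \<delta>"
      using that assms(1) mult_left_mono[of 1 L \<delta>] by (simp add: divide_le_eq)
  qed simp
  moreover have "1 \<le> ln (exp 1 * real n / real s)" using assms by (intro ln_exp_mult_div_ge_1) auto
  ultimately show ?thesis by blast
qed

lemma gnp_prob_few_crossing_edges:
  fixes \<epsilon> \<alpha> \<delta> :: real
  assumes \<epsilon>: "0 < \<epsilon>" "\<epsilon> \<le> real n" and \<delta>: "0 \<le> \<delta>"
    and S: "S \<subseteq> {..<n}" "0 < card S" "real (card S) \<le> \<alpha> * real n"
  shows "gnp_prob n (\<epsilon> / real n)
           (\<lambda>R. real (card (R \<inter> crossing_pairs n S)) < cut_threshold \<delta> n (card S))
         \<le> exp (- (\<epsilon> * (1 - \<alpha>) / 2 - \<delta>) * real (card S))"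
proof -
  let ?p = "\<epsilon> / real n" and ?s = "real (card S)"
  have n: "0 < real n" using \<epsilon> by linarith
  have s: "card S \<le> n" using card_mono[OF _ S(1)] by simp
  have crossing: "\<epsilon> * (1 - \<alpha>) / 2 * ?s \<le> ?p * real (card (crossing_pairs n S)) / 2"
  proof -
    have "(1 - \<alpha>) * real n \<le> real n - ?s" using S(3) by (simp add: algebra_simps)
    then have "?s * ((1 - \<alpha>) * real n) \<le> ?s * (real n - ?s)" by (intro mult_left_mono) auto
    moreover have "real (card (crossing_pairs n S)) = ?s * (real n - ?s)"
      using card_crossing_pairs[OF S(1)] s by (simp add: of_nat_diff)
    ultimately have "?p * (?s * ((1 - \<alpha>) * real n)) / 2 \<le> ?p * real (card (crossing_pairs n S)) / 2"
      using \<epsilon> by (intro divide_right_mono mult_left_mono) auto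
    moreover have "?p * (?s * ((1 - \<alpha>) * real n)) / 2 = \<epsilon> * (1 - \<alpha>) / 2 * ?s"
      using n by (simp add: field_simps)
    ultimately show ?thesis by simp
  qed
  have "gnp_prob n ?p (\<lambda>R. real (card (R \<inter> crossing_pairs n S)) < cut_threshold \<delta> n (card S))
      \<le> exp (cut_threshold \<delta> n (card S) - ?p * real (card (crossing_pairs n S)) / 2)"
    using \<epsilon> n by (intro gnp_prob_card_Int_less crossing_pairs_subset_all_pairs[OF S(1)]) auto
  also have "\<dots> \<le> exp (\<delta> * ?s - \<epsilon> * (1 - \<alpha>) / 2 * ?s)"
    using crossing cut_threshold_le[OF \<delta> S(2) s] by simp
  also have "\<dots> = exp (- (\<epsilon> * (1 - \<alpha>) / 2 - \<delta>) * ?s)"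
    by (simp add: algebra_simps)
  finally show ?thesis .
qed

lemma card_small_boundary_sets_of_size:
  fixes c :: real
  assumes conn: "connected_graph n E" and c: "0 < c" and s: "1 \<le> s" "s \<le> n"
  defines "\<delta> \<equiv> expansion_const c"
  shows "real (card {S. S \<subseteq> {..<n} \<and> card S = s \<and> real (card (boundary E S)) < cut_threshold \<delta> n s})
           \<le> exp ((c - \<delta>) * real s / 2)"
proof -
  define L where "L = ln (exp 1 * real n / real s)"
  define k where "k = 2 * \<delta> * real s / L"
  define y where "y = k / real n"
  have E: "E \<subseteq> all_pairs n" using conn unfolding connected_graph_def by auto
  have \<delta>: "0 < \<delta>" "2 * \<delta> \<le> 1"
    using expansion_const_pos[OF c] expansion_const_le[OF c] by (auto simp: \<delta>_def)
  have L: "1 \<le> L" unfolding L_def using s by (intro ln_exp_mult_div_ge_1) auto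
  have k: "0 < k" "k \<le> real s"
  proof -
    show "0 < k" unfolding k_def using \<delta> L s by simp
    have "k \<le> 2 * \<delta> * real s / 1" unfolding k_def using L \<delta> s by (intro divide_left_mono) auto
    also have "\<dots> \<le> real s" using \<delta> s by simp
    finally show "k \<le> real s" .
  qed
  have y: "0 < y" "y \<le> 1" unfolding y_def using k s by auto
  let ?T = "{S. S \<subseteq> {..<n} \<and> card S = s \<and> real (card (boundary E S)) < cut_threshold \<delta> n s}"
  have "real (card ?T) \<le> (1 + 2 * y) ^ n / y powr k"
  proof (rule card_sets_with_few_boundary_vertices[OF conn _ y])
    fix S assume S: "S \<in> ?T"
    have "real (card (\<Union>(boundary E S))) \<le> 2 * real (card (boundary E S))"
      using card_Union_boundary_le[OF E, of S] by linarith
    also have "\<dots> < k" using S unfolding k_def L_def by simp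
    finally show "S \<subseteq> {..<n} \<and> S \<noteq> {} \<and> real (card (\<Union>(boundary E S))) < k"
      using S s by auto
  qed
  also have "\<dots> \<le> exp (2 * k) / y powr k"
  proof -
    have "(1 + 2 * y) ^ n \<le> exp (2 * y) ^ n"
      using y by (intro power_mono) (auto simp: add.commute)
    also have "\<dots> = exp (2 * k)" unfolding y_def using s by (simp add: exp_of_nat_mult[symmetric])
    finally show ?thesis using y by (intro divide_right_mono) auto
  qed
  also have "\<dots> = exp (2 * k + k * ln (real n / k))"
  proof -
    have "ln y = - ln (real n / k)" unfolding y_def using k s by (simp add: ln_div)
    then have "y powr k = inverse (exp (k * ln (real n / k)))" using y by (simp add: powr_def exp_minus)
    then show ?thesis by (simp add: exp_add divide_inverse)
  qed
  also have "\<dots> \<le> exp ((c - \<delta>) * real s / 2)"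
    using boundary_entropy_le[OF c, of "real s" "real n"] s by (simp add: \<delta>_def k_def L_def)
  finally show ?thesis .
qed

lemma sparse_cut_large:
  assumes conn: "connected_graph n E" and \<alpha>: "\<alpha> < 1" and \<delta>: "0 < \<delta>"
    and S: "S \<in> sparse_cuts \<alpha> \<delta> n E"
  shows "sqrt (real n) < real (card S) \<or> ln (real n) / (2 * \<delta>) < real (card S)"
proof (rule large_if_cut_threshold_gt_1[OF \<delta>])
  have S: "S \<subseteq> {..<n}" "0 < card S" "real (card S) \<le> \<alpha> * real n"
    "real (card (boundary E S)) < cut_threshold \<delta> n (card S)"
    using S unfolding sparse_cuts_def by auto
  then show "1 \<le> real (card S)" by simp
  have "card S \<le> n" using card_mono[OF _ S(1)] by simp
  then show "real (card S) \<le> real n" by simp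
  with S(2) have "\<alpha> * real n < real n" using \<alpha> by simp
  then have "card S < n" using S(3) by linarith
  have "0 < card (boundary E S)"
    using connected_graph_card_boundary_pos[OF conn S(1)] S(2) \<open>card S < n\<close> by force
  then show "1 < cut_threshold \<delta> n (card S)" using S(4) by linarith
qed

lemma finite_sparse_cuts: "finite (sparse_cuts \<alpha> \<delta> n E)"
  unfolding sparse_cuts_def by (rule finite_subset[of _ "Pow {..<n}"]) auto

lemma sum_sparse_cuts_of_size_le:
  fixes c \<alpha> :: real
  assumes conn: "connected_graph n E" and c: "0 < c" and \<alpha>: "\<alpha> < 1"
  defines "\<delta> \<equiv> expansion_const c"
  defines "X \<equiv> exp (- (c - \<delta>) * sqrt (real n) / 4) + exp (- (c - \<delta>) * (ln (real n) / (2 * \<delta>)) / 4)"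
  shows "(\<Sum>S\<in>{S\<in>sparse_cuts \<alpha> \<delta> n E. card S = s}. exp (- (c - \<delta>) * real (card S)))
           \<le> X * exp (- (c - \<delta>) * real s / 4)"
proof (cases "{S\<in>sparse_cuts \<alpha> \<delta> n E. card S = s} = {}")
  case True
  then show ?thesis unfolding X_def by (simp only: True sum.empty) simp
next
  case False
  let ?a = "c - \<delta>" and ?T = "{S\<in>sparse_cuts \<alpha> \<delta> n E. card S = s}"
  have \<delta>: "0 < \<delta>" "2 * \<delta> \<le> c"
    using expansion_const_pos[OF c] expansion_const_le[OF c] by (auto simp: \<delta>_def)
  then have a: "0 < ?a" by linarith
  from False obtain S where S: "S \<in> sparse_cuts \<alpha> \<delta> n E" "card S = s" by auto
  then have s: "1 \<le> s" "s \<le> n"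
    using card_mono[of "{..<n}" S] unfolding sparse_cuts_def by auto
  have mono: "exp (- ?a * real s / 4) \<le> exp (- ?a * t / 4)" if "t < real s" for t
    using that a by (simp add: mult_left_mono)
  have large: "exp (- ?a * real s / 4) \<le> X"
    using sparse_cut_large[OF conn \<alpha> \<delta>(1) S(1)] mono unfolding X_def S(2)
    by (smt (verit) exp_gt_zero)
  let ?U = "{S. S \<subseteq> {..<n} \<and> card S = s \<and> real (card (boundary E S)) < cut_threshold \<delta> n s}"
  have "card ?T \<le> card ?U"
    by (rule card_mono) (auto simp: sparse_cuts_def intro: finite_subset[of _ "Pow {..<n}"])
  then have count: "real (card ?T) \<le> exp (?a * real s / 2)"
    using card_small_boundary_sets_of_size[OF conn c s] unfolding \<delta>_def by linarith
  have "(\<Sum>S\<in>?T. exp (- ?a * real (card S))) = real (card ?T) * exp (- ?a * real s)" by simp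
  also have "\<dots> \<le> exp (?a * real s / 2) * exp (- ?a * real s)"
    using count by (intro mult_right_mono) auto
  also have "\<dots> = exp (- ?a * real s / 4) * exp (- ?a * real s / 4)"
    by (simp only: exp_add[symmetric]) (simp add: field_simps)
  also have "\<dots> \<le> X * exp (- ?a * real s / 4)"
    using large by (intro mult_right_mono) auto
  finally show ?thesis .
qed

lemma sum_sparse_cuts_le:
  fixes c \<alpha> :: real
  assumes conn: "connected_graph n E" and c: "0 < c" and \<alpha>: "\<alpha> < 1"
  defines "\<delta> \<equiv> expansion_const c"
  shows "(\<Sum>S\<in>sparse_cuts \<alpha> \<delta> n E. exp (- (c - \<delta>) * real (card S))) \<le> sparse_cut_tail (c - \<delta>) \<delta> n"
proof -
  let ?a = "c - \<delta>" and ?SC = "sparse_cuts \<alpha> \<delta> n E"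
  define X where "X = exp (- ?a * sqrt (real n) / 4) + exp (- ?a * (ln (real n) / (2 * \<delta>)) / 4)"
  have "0 < ?a"
    using expansion_const_pos[OF c] expansion_const_le[OF c] by (simp add: \<delta>_def)
  have "(\<Sum>S\<in>?SC. exp (- ?a * real (card S)))
          = (\<Sum>s\<le>n. \<Sum>S\<in>{S\<in>?SC. card S = s}. exp (- ?a * real (card S)))"
    by (rule sum.group[symmetric, OF finite_sparse_cuts])
      (auto simp: sparse_cuts_def card_mono[of "{..<n}", simplified])
  also have "\<dots> \<le> (\<Sum>s\<le>n. X * exp (- ?a * real s / 4))"
    using sum_sparse_cuts_of_size_le[OF conn c \<alpha>] unfolding X_def \<delta>_def by (intro sum_mono) blast
  also have "\<dots> = X * (\<Sum>s\<le>n. exp (- ?a * real s / 4))" by (simp add: sum_distrib_left)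
  also have "\<dots> \<le> X * (1 / (1 - exp (- ?a / 4)))"
    using sum_exp_le_geometric[OF \<open>0 < ?a\<close>] by (intro mult_left_mono) (auto simp: X_def)
  finally show ?thesis unfolding X_def sparse_cut_tail_def by simp
qed

lemma gnp_prob_not_log_expanding_le:
  fixes \<epsilon> \<alpha> :: real
  assumes \<epsilon>: "0 < \<epsilon>" "\<epsilon> \<le> real n" and \<alpha>: "\<alpha> < 1" and conn: "connected_graph n E"
  defines "c \<equiv> \<epsilon> * (1 - \<alpha>) / 2"
  defines "\<delta> \<equiv> expansion_const c"
  shows "gnp_prob n (\<epsilon> / real n) (\<lambda>R. \<not> log_expanding \<alpha> \<delta> n (E \<union> R)) \<le> sparse_cut_tail (c - \<delta>) \<delta> n"
proof -
  let ?p = "\<epsilon> / real n" and ?SC = "sparse_cuts \<alpha> \<delta> n E"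
  let ?few = "\<lambda>S R. real (card (R \<inter> crossing_pairs n S)) < cut_threshold \<delta> n (card S)"
  have p: "0 \<le> ?p" "?p \<le> 1" using \<epsilon> by auto
  have c: "0 < c" unfolding c_def using \<epsilon> \<alpha> by simp
  have "gnp_prob n ?p (\<lambda>R. \<not> log_expanding \<alpha> \<delta> n (E \<union> R)) \<le> gnp_prob n ?p (\<lambda>R. \<exists>S\<in>?SC. ?few S R)"
  proof (rule gnp_prob_mono[OF p])
    fix R assume R: "R \<subseteq> all_pairs n" "\<not> log_expanding \<alpha> \<delta> n (E \<union> R)"
    then obtain S where S: "S \<subseteq> {..<n}" "0 < card S" "real (card S) \<le> \<alpha> * real n"
      and lt: "real (card (boundary (E \<union> R) S)) < cut_threshold \<delta> n (card S)" by auto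
    have fin: "finite (boundary (E \<union> R) S)"
      using conn R(1) by (intro finite_boundary) (auto simp: connected_graph_def)
    have "real (card (boundary E S)) \<le> real (card (boundary (E \<union> R) S))"
      by (intro of_nat_mono card_mono[OF fin boundary_mono]) simp
    with S lt have "S \<in> ?SC" unfolding sparse_cuts_def by auto
    moreover have "real (card (R \<inter> crossing_pairs n S)) \<le> real (card (boundary (E \<union> R) S))"
      by (intro of_nat_mono card_mono[OF fin Int_crossing_pairs_subset_boundary])
    with lt have "?few S R" by linarith
    ultimately show "\<exists>S\<in>?SC. ?few S R" by blast
  qed
  also have "\<dots> \<le> (\<Sum>S\<in>?SC. gnp_prob n ?p (?few S))"
    by (rule gnp_prob_Bex_le_sum[OF p finite_sparse_cuts])
  also have "\<dots> \<le> (\<Sum>S\<in>?SC. exp (- (c - \<delta>) * real (card S)))"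
  proof (rule sum_mono)
    fix S assume "S \<in> ?SC"
    then show "gnp_prob n ?p (?few S) \<le> exp (- (c - \<delta>) * real (card S))"
      using gnp_prob_few_crossing_edges[OF \<epsilon>, of \<delta> S \<alpha>] expansion_const_pos[OF c]
      unfolding sparse_cuts_def c_def \<delta>_def by auto
  qed
  also have "\<dots> \<le> sparse_cut_tail (c - \<delta>) \<delta> n"
    unfolding \<delta>_def by (rule sum_sparse_cuts_le[OF conn c \<alpha>])
  finally show ?thesis .
qed

lemma gnp_log_expanding_tendsto_1:
  fixes \<epsilon> \<alpha> :: real
  assumes \<epsilon>: "0 < \<epsilon>" and \<alpha>: "\<alpha> < 1" and conn: "\<And>n. connected_graph n (G n)"
  defines "\<delta> \<equiv> expansion_const (\<epsilon> * (1 - \<alpha>) / 2)"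
  shows "(\<lambda>n. gnp_prob n (\<epsilon> / real n) (\<lambda>R. log_expanding \<alpha> \<delta> n (G n \<union> R))) \<longlonglongrightarrow> 1"
proof (rule gnp_prob_tendsto_1I[OF eventually_edge_prob_le_1[OF \<epsilon>]])
  let ?c = "\<epsilon> * (1 - \<alpha>) / 2"
  have c: "0 < ?c" using \<epsilon> \<alpha> by simp
  have "eventually (\<lambda>n. \<epsilon> \<le> real n) sequentially"
    using filterlim_real_sequentially by (simp add: filterlim_at_top)
  then show "eventually (\<lambda>n. gnp_prob n (\<epsilon> / real n) (\<lambda>R. \<not> log_expanding \<alpha> \<delta> n (G n \<union> R))
                              \<le> sparse_cut_tail (?c - \<delta>) \<delta> n) sequentially"
    by eventually_elim (use gnp_prob_not_log_expanding_le[OF \<epsilon> _ \<alpha> conn] in \<open>simp add: \<delta>_def\<close>)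
  show "sparse_cut_tail (?c - \<delta>) \<delta> \<longlonglongrightarrow> 0"
    using expansion_const_pos[OF c] expansion_const_le[OF c] unfolding \<delta>_def
    by (intro sparse_cut_tail_tendsto_0) auto
qed

lemma cheeger_ge_if_log_expanding:
  fixes \<delta> :: real
  assumes n: "2 \<le> n" and \<delta>: "0 < \<delta>" and H: "log_expanding (1/2) \<delta> n H"
  shows "\<delta> / ln (exp 1 * real n) \<le> cheeger n H"
proof -
  let ?U = "{U. U \<subseteq> {..<n} \<and> 0 < card U \<and> real (card U) \<le> real n / 2}"
  let ?X = "{real (card (boundary H U)) / real (card U) | U. U \<in> ?U}"
  have "finite ?U" by (rule finite_subset[of _ "Pow {..<n}"]) auto
  then have fin: "finite ?X" by simp
  have "{0} \<in> ?U" using n by auto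
  then have ne: "?X \<noteq> {}" by blast
  have "\<delta> / ln (exp 1 * real n) \<le> real (card (boundary H U)) / real (card U)" if U: "U \<in> ?U" for U
  proof -
    have u: "1 \<le> real (card U)" "real (card U) \<le> real n" using U by auto
    have pos: "0 < exp 1 * real n" using n by simp
    then have "exp 1 * real n / real (card U) \<le> exp 1 * real n / 1"
      using u by (intro divide_left_mono) auto
    then have "ln (exp 1 * real n / real (card U)) \<le> ln (exp 1 * real n)"
      using u pos by (subst ln_le_cancel_iff) auto
    moreover have "1 \<le> ln (exp 1 * real n / real (card U))"
      using u by (intro ln_exp_mult_div_ge_1) auto
    ultimately have "\<delta> / ln (exp 1 * real n) \<le> \<delta> / ln (exp 1 * real n / real (card U))"
      using \<delta> by (intro divide_left_mono) auto
    also have "\<dots> \<le> real (card (boundary H U)) / real (card U)"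
      using H U u by (simp add: le_divide_eq)
    finally show ?thesis .
  qed
  then show ?thesis unfolding cheeger_def using Min_ge_iff[OF fin ne] by auto
qed

theorem theorem2:
  shows "(\<forall>\<epsilon>::real>0. \<forall>\<alpha>::real<1. \<exists>\<delta>::real>0. \<forall>G :: nat \<Rightarrow> nat set set.
            (\<forall>n. connected_graph n (G n)) \<longrightarrow>
            (\<lambda>n. gnp_prob n (\<epsilon> / real n) (\<lambda>R.
                \<forall>S. S \<subseteq> {..<n} \<and> 0 < card S \<and> real (card S) \<le> \<alpha> * real n \<longrightarrow>
                  real (card (boundary (G n \<union> R) S)) \<ge>
                    \<delta> / ln (exp 1 * real n / real (card S)) * real (card S)))
            \<longlonglongrightarrow> 1)
       \<and> (\<forall>\<epsilon>::real>0. \<exists>\<delta>::real>0. \<forall>G :: nat \<Rightarrow> nat set set.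
            (\<forall>n. connected_graph n (G n)) \<longrightarrow>
            (\<lambda>n. gnp_prob n (\<epsilon> / real n) (\<lambda>R.
                cheeger n (G n \<union> R) \<ge> \<delta> / ln (exp 1 * real n)))
            \<longlonglongrightarrow> 1)"
proof (intro conjI allI impI)
  fix \<epsilon> \<alpha> :: real assume \<epsilon>: "0 < \<epsilon>" and \<alpha>: "\<alpha> < 1"
  show "\<exists>\<delta>>0. \<forall>G. (\<forall>n. connected_graph n (G n)) \<longrightarrow>
          (\<lambda>n. gnp_prob n (\<epsilon> / real n) (\<lambda>R. log_expanding \<alpha> \<delta> n (G n \<union> R))) \<longlonglongrightarrow> 1"
    by (intro exI[of _ "expansion_const (\<epsilon> * (1 - \<alpha>) / 2)"] conjI allI impI expansion_const_pos
        gnp_log_expanding_tendsto_1[OF \<epsilon> \<alpha>]) (use \<epsilon> \<alpha> in auto)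
next
  fix \<epsilon> :: real assume \<epsilon>: "0 < \<epsilon>"
  let ?\<delta> = "expansion_const (\<epsilon> * (1 - 1/2) / 2)"
  show "\<exists>\<delta>>0. \<forall>G. (\<forall>n. connected_graph n (G n)) \<longrightarrow>
          (\<lambda>n. gnp_prob n (\<epsilon> / real n) (\<lambda>R. cheeger n (G n \<union> R) \<ge> \<delta> / ln (exp 1 * real n)))
            \<longlonglongrightarrow> 1"
  proof (intro exI[of _ ?\<delta>] conjI allI impI)
    show \<delta>: "0 < ?\<delta>" using \<epsilon> by (simp add: expansion_const_pos)
    fix G :: "nat \<Rightarrow> nat set set" assume "\<forall>n. connected_graph n (G n)"
    then have "(\<lambda>n. gnp_prob n (\<epsilon> / real n) (\<lambda>R. log_expanding (1/2) ?\<delta> n (G n \<union> R))) \<longlonglongrightarrow> 1"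
      using gnp_log_expanding_tendsto_1[OF \<epsilon>, of "1/2"] by simp
    then show "(\<lambda>n. gnp_prob n (\<epsilon> / real n) (\<lambda>R. cheeger n (G n \<union> R) \<ge> ?\<delta> / ln (exp 1 * real n)))
                 \<longlonglongrightarrow> 1"
      by (rule gnp_prob_tendsto_1_mono[OF eventually_edge_prob_le_1[OF \<epsilon>]])
        (use eventually_ge_at_top[of 2] in \<open>eventually_elim, use cheeger_ge_if_log_expanding \<delta> in blast\<close>)
  qed
qed

end
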